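(* Let $m\ge 2$ be an integer and let $P=(A_1,A_2,\dots,A_{m+1})$ be a cyclic $(m+1)$-gon (distinct vertices on a circle) with vertices ordered anticlockwise. Then \[ S_{1,m,m+1}\prod_{i=2}^{m-1} x_{i,m+1} = \sum_{j=1}^{m-1} S_{j,j+1,m+1}\, \frac{\prod_{k=1}^{m} x_{k,m+1}}{x_{j,m+1}\,x_{j+1,m+1}}. \]
   Context: For points $A_p=(x_p,y_p)$, $x_{pq}:=(x_q-x_p)^2+(y_q-y_p)^2$ is the squared distance between $A_p$ and $A_q$, and $S_{pqr}:=2[(x_q-x_p)(y_r-y_p)-(y_q-y_p)(x_r-x_p)]$ is four times the signed area of the triangle $A_pA_qA_r$. An empty product equals $1$. *)

theory Defs
  imports Complex_Main
begin

definition sqd :: "(nat \<Rightarrow> real \<times> real) \<Rightarrow> nat \<Rightarrow> nat \<Rightarrow> real" where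
  "sqd A p q = (fst (A q) - fst (A p))^2 + (snd (A q) - snd (A p))^2"

(* S_{pqr}: four times the signed area of triangle A_p A_q A_r *)
definition sarea :: "(nat \<Rightarrow> real \<times> real) \<Rightarrow> nat \<Rightarrow> nat \<Rightarrow> nat \<Rightarrow> real" where
  "sarea A p q r = 2 * ((fst (A q) - fst (A p)) * (snd (A r) - snd (A p))
                       - (snd (A q) - snd (A p)) * (fst (A r) - fst (A p)))"

(* A_1, ..., A_n lie on a circle (centre c, radius r > 0) and are met in this
   order when traversing the circle anticlockwise exactly once: their polar
   angles can be chosen strictly increasing within one full turn. *)
definition cyclic_anticlockwise :: "(nat \<Rightarrow> real \<times> real) \<Rightarrow> nat \<Rightarrow> bool" where
  "cyclic_anticlockwise A n \<longleftrightarrow>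
     (\<exists>c r \<theta>. r > 0 \<and>
        (\<forall>i\<in>{1..n}. A i = (fst c + r * cos (\<theta> i), snd c + r * sin (\<theta> i))) \<and>
        (\<forall>i\<in>{1..<n}. \<theta> i < \<theta> (Suc i)) \<and>
        \<theta> n < \<theta> 1 + 2 * pi)"

end

theory Submission
  imports Defs
begin

text \<open>Translate \<open>A (m+1)\<close> to the origin. Inversion in the origin maps the circle
  through it onto a line and sends \<open>a\<close> to \<open>a / |a|\<^sup>2\<close>, so the cross product of the
  inverted points of \<open>A a\<close> and \<open>A b\<close> is half of \<open>F a b = S(a, b, m+1) / (x(a, m+1) * x(b, m+1))\<close>.
  Three collinear points span a triangle of zero area, hence \<open>F a b + F b c = F a c\<close>;
  the sum therefore telescopes to \<open>F 1 m\<close>, and clearing denominators gives the identity.\<close>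

lemma cross_identity_on_circle_through_origin:
  fixes a1 a2 b1 b2 c1 c2 w1 w2 :: real
  assumes "a1^2 + a2^2 = 2 * (a1 * w1 + a2 * w2)"
    and "b1^2 + b2^2 = 2 * (b1 * w1 + b2 * w2)"
    and "c1^2 + c2^2 = 2 * (c1 * w1 + c2 * w2)"
  shows "(a1 * b2 - a2 * b1) * (c1^2 + c2^2) + (b1 * c2 - b2 * c1) * (a1^2 + a2^2)
       = (a1 * c2 - a2 * c1) * (b1^2 + b2^2)"
  unfolding assms by algebra

lemma sqd_eq_0_iff: "sqd A p q = 0 \<longleftrightarrow> A p = A q"
  unfolding sqd_def by (auto simp: prod_eq_iff sum_power2_eq_zero_iff)

lemma sarea_div_sqd_additive_on_circle:
  fixes A :: "nat \<Rightarrow> real \<times> real" and c :: "real \<times> real"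
  assumes on_circle: "\<And>i. i \<in> {a, b, d, p} \<Longrightarrow> (fst (A i) - fst c)^2 + (snd (A i) - snd c)^2 = r^2"
    and distinct: "A a \<noteq> A p" "A b \<noteq> A p" "A d \<noteq> A p"
  shows "sarea A a b p / (sqd A a p * sqd A b p) + sarea A b d p / (sqd A b p * sqd A d p)
       = sarea A a d p / (sqd A a p * sqd A d p)"
proof -
  define u where "u i = (fst (A i) - fst (A p), snd (A i) - snd (A p))" for i
  define w where "w = (fst c - fst (A p), snd c - snd (A p))"
  have circle_through_origin: "(fst (u i))^2 + (snd (u i))^2 = 2 * (fst (u i) * fst w + snd (u i) * snd w)"
    if "i \<in> {a, b, d}" for i
  proof -
    have "(fst (A i) - fst c)^2 + (snd (A i) - snd c)^2 = (fst (A p) - fst c)^2 + (snd (A p) - snd c)^2"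
      using that on_circle[of i] on_circle[of p] by auto
    then show ?thesis
      unfolding u_def w_def by (simp add: power2_eq_square algebra_simps)
  qed
  have sarea_u: "sarea A i j p = 2 * (fst (u i) * snd (u j) - snd (u i) * fst (u j))" for i j
    unfolding sarea_def u_def by (simp add: algebra_simps)
  have sqd_u: "sqd A i p = (fst (u i))^2 + (snd (u i))^2" for i
    unfolding sqd_def u_def by (simp add: power2_commute)
  have "sqd A a p \<noteq> 0" "sqd A b p \<noteq> 0" "sqd A d p \<noteq> 0"
    using distinct by (simp_all add: sqd_eq_0_iff)
  moreover have "sarea A a b p * sqd A d p + sarea A b d p * sqd A a p = sarea A a d p * sqd A b p"
    using cross_identity_on_circle_through_origin[OF circle_through_origin circle_through_origin
        circle_through_origin, of a b d]
    unfolding sarea_u sqd_u by (simp add: algebra_simps)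
  ultimately show ?thesis by (simp add: field_simps)
qed

lemma sum_consecutive_eq_if_additive:
  fixes F :: "nat \<Rightarrow> nat \<Rightarrow> 'a::ab_group_add"
  assumes "a \<le> Suc b"
    and "\<And>j. a \<le> j \<Longrightarrow> j \<le> b \<Longrightarrow> F a j + F j (Suc j) = F a (Suc j)"
    and "F a a = 0"
  shows "(\<Sum>j=a..b. F j (Suc j)) = F a (Suc b)"
proof -
  have "(\<Sum>j=a..b. F j (Suc j)) = (\<Sum>j=a..b. F a (Suc j) - F a j)"
    using assms(2) by (intro sum.cong) (auto simp: algebra_simps)
  also have "\<dots> = F a (Suc b)"
    using sum_Suc_diff[OF assms(1), of "F a"] assms(3) by simp
  finally show ?thesis .
qed

lemma cyclic_anticlockwise_on_circle:
  assumes "cyclic_anticlockwise A n"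
  obtains c r where "\<And>i. i \<in> {1..n} \<Longrightarrow> (fst (A i) - fst c)^2 + (snd (A i) - snd c)^2 = r^2"
proof -
  obtain c r \<theta> where "\<forall>i\<in>{1..n}. A i = (fst c + r * cos (\<theta> i), snd c + r * sin (\<theta> i))"
    using assms unfolding cyclic_anticlockwise_def by blast
  then have "(fst (A i) - fst c)^2 + (snd (A i) - snd c)^2 = r^2" if "i \<in> {1..n}" for i
    using that by (simp add: power_mult_distrib flip: distrib_left)
  then show thesis by (rule that)
qed

theorem theorem2p9:
  fixes m :: nat and A :: "nat \<Rightarrow> real \<times> real"
  assumes "m \<ge> 2"
    and "inj_on A {1..m+1}"
    and "cyclic_anticlockwise A (m+1)"
  shows "sarea A 1 m (m+1) * (\<Prod>i=2..m-1. sqd A i (m+1))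
       = (\<Sum>j=1..m-1. sarea A j (j+1) (m+1) *
            ((\<Prod>k=1..m. sqd A k (m+1)) / (sqd A j (m+1) * sqd A (j+1) (m+1))))"
proof -
  obtain c r where on_circle: "\<And>i. i \<in> {1..m+1} \<Longrightarrow> (fst (A i) - fst c)^2 + (snd (A i) - snd c)^2 = r^2"
    using cyclic_anticlockwise_on_circle[OF assms(3)] by blast
  have distinct: "A k \<noteq> A (m+1)" if "k \<in> {1..m}" for k
    using that assms(2) by (auto dest: inj_onD)
  define F where "F a b = sarea A a b (m+1) / (sqd A a (m+1) * sqd A b (m+1))" for a b
  have additive: "F 1 j + F j (Suc j) = F 1 (Suc j)" if "1 \<le> j" "j \<le> m - 1" for j
    unfolding F_def using that assms(1)
    by (intro sarea_div_sqd_additive_on_circle[where c=c and r=r] on_circle distinct) auto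
  have telescope: "(\<Sum>j=1..m-1. F j (Suc j)) = F 1 m"
    using sum_consecutive_eq_if_additive[of 1 "m-1" F] additive assms(1)
    by (simp add: F_def sarea_def)
  have prod_split: "(\<Prod>k=1..m. sqd A k (m+1)) = sqd A 1 (m+1) * sqd A m (m+1) * (\<Prod>i=2..m-1. sqd A i (m+1))"
  proof -
    have "{1..m} = insert 1 (insert m {2..m-1})" using assms(1) by auto
    then show ?thesis using assms(1) by (simp add: algebra_simps)
  qed
  have "sqd A 1 (m+1) \<noteq> 0" "sqd A m (m+1) \<noteq> 0"
    using distinct[of 1] distinct[of m] assms(1) by (simp_all add: sqd_eq_0_iff)
  then have "sarea A 1 m (m+1) * (\<Prod>i=2..m-1. sqd A i (m+1)) = (\<Prod>k=1..m. sqd A k (m+1)) * F 1 m"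
    unfolding prod_split F_def by (simp add: field_simps)
  also have "\<dots> = (\<Sum>j=1..m-1. (\<Prod>k=1..m. sqd A k (m+1)) * F j (Suc j))"
    by (simp only: telescope flip: sum_distrib_left)
  finally show ?thesis
    unfolding F_def by (simp add: algebra_simps)
qed

end
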